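(* Assume $\delta_0=0$ and $$\mu(\mathcal M,W):=\tfrac12\sup_{\sigma>0}\frac{\delta_\sigma}{\sigma}<\infty.$$ Then for every $u\in\mathcal M$ with $w=P_Wu$, the estimator $u^*=u^*(w)$ obtained by surrogate model selection satisfies $$\|u-u^*\|\le C\min_{k=1,\dots,K}\|u-u_k^*(w)\|,\qquad C:=2\mu(\mathcal M,W)\kappa.$$ If moreover the family is $\sigma$-admissible for some $\sigma>0$, then $\|u-u^*\|\le C\sigma$.
   Context: Let $V$ be a real Hilbert space with norm $\|\cdot\|$. Let $Y\subset\mathbb R^d$ be compact and let $y\mapsto u(y)$ be a continuous map from $Y$ to $V$. Set $\mathcal M=\{u(y):y\in Y\}$, which is compact. Let $W\subset V$ be a linear subspace of finite dimension $m$, let $P_W$ be the orthogonal projection onto $W$, and let $W^\perp$ be its orthogonal complement. For $w\in W$ put $V_w=w+W^\perp$. For $\sigma\ge 0$ define - $\mathcal M_\sigma=\{v\in V:\operatorname{dist}(v,\mathcal M)\le\sigma\}$; - $\delta_\sigma=\sup\{\|u-v\|: u,v\in\mathcal M_\sigma,\ u-v\in W^\perp\}$. For a finite-dimensional subspace $E\subset V$ let $\mu(E,W)=\sup_{v\in E\setminus\{0\}}\|v\|/\|P_Wv\|$, with the conventions $\mu(\{0\},W)=1$ and $\mu(E,W)=+\infty$ if $E\cap W^\perp\ne\{0\}$. A reduced model family consists of: - sets $\mathcal M_1,\dots,\mathcal M_K$ with $\mathcal M=\bigcup_{k=1}^K\mathcal M_k$; - affine spaces $V_k=\bar u_k+\bar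 V_k$, where $\bar u_k\in V$ and $\bar V_k$ is a linear subspace of dimension $n_k\le m$; - numbers $\varepsilon_k\ge\sup_{u\in\mathcal M_k}\operatorname{dist}(u,V_k)$; - constants $\mu_k=\mu(\bar V_k,W)<\infty$. The family is $\sigma$-admissible if $\mu_k\varepsilon_k\le\sigma$ for all $k$. For $w\in W$ the PBDW estimators are $u_k^*(w)=\operatorname{argmin}\{\operatorname{dist}(v,V_k): v\in V_w\}$, $k=1,\dots,K$ (the minimizer is unique). A surrogate is a function $\mathcal S(\cdot,\mathcal M):V\to[0,\infty)$ with $r\operatorname{dist}(v,\mathcal M)\le\mathcal S(v,\mathcal M)\le R\operatorname{dist}(v,\mathcal M)$ for all $v\in V$, where $0<r\le R$ are constants; set $\kappa=R/r$. Surrogate model selection picks $k^*(w)$ as any minimizer of $k\mapsto\mathcal S(u_k^*(w),\mathcal M)$ over $\{1,\dots,K\}$ and sets $u^*(w)=u^*_{k^*(w)}(w)$. *)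

theory Defs
  imports "HOL-Analysis.Analysis"
begin

definition orth_proj :: "'v::real_inner set \<Rightarrow> 'v \<Rightarrow> 'v" where
  "orth_proj W v = (THE p. p \<in> W \<and> v - p \<in> orthogonal_comp W)"

definition fin_dim_subspace :: "'v::real_vector set \<Rightarrow> bool" where
  "fin_dim_subspace E \<longleftrightarrow> subspace E \<and> (\<exists>B. finite B \<and> E = span B)"

definition nbhd :: "'v::real_normed_vector set \<Rightarrow> real \<Rightarrow> 'v set" where
  "nbhd M \<sigma> = {v. infdist v M \<le> \<sigma>}"

definition delta :: "'v::real_inner set \<Rightarrow> 'v set \<Rightarrow> real \<Rightarrow> real" where
  "delta M W \<sigma> = Sup {norm (u - v) | u v. u \<in> nbhd M \<sigma> \<and> v \<in> nbhd M \<sigma> \<and> u - v \<in> orthogonal_comp W}"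

text \<open>mu(M,W) = 1/2 sup_{sigma>0} delta_sigma / sigma (meaningful when bounded above).\<close>
definition mu_MW :: "'v::real_inner set \<Rightarrow> 'v set \<Rightarrow> real" where
  "mu_MW M W = Sup ((\<lambda>\<sigma>. delta M W \<sigma> / \<sigma>) ` {0<..}) / 2"

definition mu_EW :: "'v::real_inner set \<Rightarrow> 'v set \<Rightarrow> ereal" where
  "mu_EW E W = (if E = {0} then 1
     else if E \<inter> orthogonal_comp W \<noteq> {0} then \<infinity>
     else (SUP v\<in>E - {0}. ereal (norm v / norm (orth_proj W v))))"

definition Vw :: "'v::real_inner set \<Rightarrow> 'v \<Rightarrow> 'v set" where
  "Vw W w = (\<lambda>x. w + x) ` orthogonal_comp W"

definition pbdw :: "'v::real_inner set \<Rightarrow> 'v set \<Rightarrow> 'v \<Rightarrow> 'v" where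
  "pbdw W A w = (THE v. v \<in> Vw W w \<and> (\<forall>v'\<in>Vw W w. infdist v A \<le> infdist v' A))"

end

theory Submission
  imports Defs
begin

text \<open>Both u and the selected estimator u* lie in V_w, so u - u* is orthogonal to W, and u*
  lies within s = dist(u*, M) of M. The width bound therefore gives
  norm (u - u*) \<le> \<delta>_s \<le> 2 \<mu>(M,W) s, while the selection rule and the surrogate
  bounds give r s \<le> S(u*) \<le> S(u_k*) \<le> R dist(u_k*, M) \<le> R norm (u - u_k*) for every k.
  Under \<sigma>-admissibility, a model k with u \<in> M_k has norm (u - u_k*) \<le> \<mu>_k \<epsilon>_k \<le> \<sigma>
  by the PBDW error bound; that bound comes from writing u_k* = a + g with a \<in> V_k and
  g = w - P_W a orthogonal to P_W(bar V_k), which gives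
  dist(x, V_k)^2 \<ge> norm g^2 + (norm (x - u_k*) / \<mu>_k)^2 for all x \<in> V_w.\<close>

subsection \<open>Orthogonal projection onto finite-dimensional subspaces\<close>

lemma orthogonal_comp_span: "orthogonal_comp (span S) = orthogonal_comp S"
proof
  show "orthogonal_comp (span S) \<subseteq> orthogonal_comp S"
    by (rule orthogonal_comp_anti_mono[OF span_superset])
  show "orthogonal_comp S \<subseteq> orthogonal_comp (span S)"
    unfolding orthogonal_comp_def
    using orthogonal_to_span orthogonal_commute by blast
qed

lemma orth_decomp_exists_span:
  fixes B :: "'a::real_inner set"
  assumes "finite B"
  shows "\<exists>p\<in>span B. x - p \<in> orthogonal_comp (span B)"
  using assms
proof (induction B arbitrary: x)
  case empty
  show ?case by (simp add: span_empty)
next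
  case (insert a B)
  obtain q where q: "q \<in> span B" "a - q \<in> orthogonal_comp (span B)"
    using insert.IH by blast
  obtain p where p: "p \<in> span B" "x - p \<in> orthogonal_comp (span B)"
    using insert.IH by blast
  define a' where "a' = a - q"
  \<comment> \<open>a Gram--Schmidt step; if a' = 0 the coefficient is 0 since x / 0 = 0\<close>
  define p' where "p' = p + ((x - p) \<bullet> a' / (a' \<bullet> a')) *\<^sub>R a'"
  have "p' \<in> span (insert a B)"
    unfolding p'_def a'_def using p(1) q(1)
    by (meson span_add span_diff span_mono span_scale span_base insertI1 subset_insertI subsetD)
  moreover have "x - p' \<in> orthogonal_comp (insert a B)"
  proof -
    have a'_perp: "a' \<in> orthogonal_comp (span B)"
      using q(2) by (simp add: a'_def)
    have perp_B: "x - p' \<in> orthogonal_comp (span B)"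
      unfolding p'_def using p(2) a'_perp subspace_orthogonal_comp
      by (metis diff_diff_eq subspace_diff subspace_scale)
    have "a' \<bullet> (x - p') = 0"
      by (cases "a' = 0") (simp_all add: p'_def inner_diff_right inner_add_right inner_commute)
    moreover have "q \<bullet> (x - p') = 0"
      using perp_B q(1) by (simp add: orthogonal_comp_def orthogonal_def)
    ultimately have "a \<bullet> (x - p') = 0"
      by (simp add: a'_def inner_diff_left)
    then show ?thesis
      using perp_B span_superset
      by (auto simp: orthogonal_comp_def orthogonal_def)
  qed
  ultimately show ?case
    by (auto simp: orthogonal_comp_span)
qed

lemma orth_proj_eqI:
  assumes "subspace E" "p \<in> E" "x - p \<in> orthogonal_comp E"
  shows "orth_proj E x = p"
  unfolding orth_proj_def
proof (rule the_equality)
  fix q assume q: "q \<in> E \<and> x - q \<in> orthogonal_comp E"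
  have "q - p \<in> E"
    using assms q by (simp add: subspace_diff)
  moreover have "q - p \<in> orthogonal_comp E"
    using subspace_diff[OF subspace_orthogonal_comp assms(3), of "x - q"] q by simp
  ultimately have "q - p \<in> E \<inter> orthogonal_comp E"
    by blast
  then show "q = p"
    using orthogonal_Int_0[OF assms(1)] by simp
qed (use assms in blast)

lemma
  assumes "fin_dim_subspace E"
  shows orth_proj_in: "orth_proj E x \<in> E"
    and orth_proj_perp: "x - orth_proj E x \<in> orthogonal_comp E"
proof -
  obtain B where "finite B" "E = span B" "subspace E"
    using assms by (auto simp: fin_dim_subspace_def)
  then obtain p where "p \<in> E" "x - p \<in> orthogonal_comp E"
    using orth_decomp_exists_span by blast
  moreover from this have "orth_proj E x = p"
    using orth_proj_eqI \<open>subspace E\<close> by blast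
  ultimately show "orth_proj E x \<in> E" "x - orth_proj E x \<in> orthogonal_comp E"
    by simp_all
qed

lemma linear_orth_proj:
  assumes E: "fin_dim_subspace E"
  shows "linear (orth_proj E)"
proof
  have sE: "subspace E"
    using E by (simp add: fin_dim_subspace_def)
  show "orth_proj E (x + y) = orth_proj E x + orth_proj E y" for x y
  proof (rule orth_proj_eqI[OF sE])
    show "orth_proj E x + orth_proj E y \<in> E"
      by (simp add: E orth_proj_in sE subspace_add)
    have "x + y - (orth_proj E x + orth_proj E y) = (x - orth_proj E x) + (y - orth_proj E y)"
      by simp
    then show "x + y - (orth_proj E x + orth_proj E y) \<in> orthogonal_comp E"
      by (metis E orth_proj_perp subspace_add subspace_orthogonal_comp)
  qed
  show "orth_proj E (c *\<^sub>R x) = c *\<^sub>R orth_proj E x" for c x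
  proof (rule orth_proj_eqI[OF sE])
    show "c *\<^sub>R orth_proj E x \<in> E"
      by (simp add: E orth_proj_in sE subspace_scale)
    have "c *\<^sub>R x - c *\<^sub>R orth_proj E x = c *\<^sub>R (x - orth_proj E x)"
      by (simp add: algebra_simps)
    then show "c *\<^sub>R x - c *\<^sub>R orth_proj E x \<in> orthogonal_comp E"
      by (metis E orth_proj_perp subspace_scale subspace_orthogonal_comp)
  qed
qed

lemma norm_add_orthogonal_comp:
  "a \<in> E \<Longrightarrow> b \<in> orthogonal_comp E \<Longrightarrow> (norm (a + b))\<^sup>2 = (norm a)\<^sup>2 + (norm b)\<^sup>2"
  unfolding orthogonal_comp_def by (blast intro: norm_add_Pythagorean)

lemma norm_orth_proj_Pythagorean:
  assumes E: "fin_dim_subspace E"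
  shows "(norm x)\<^sup>2 = (norm (orth_proj E x))\<^sup>2 + (norm (x - orth_proj E x))\<^sup>2"
proof -
  have "(norm (orth_proj E x + (x - orth_proj E x)))\<^sup>2
        = (norm (orth_proj E x))\<^sup>2 + (norm (x - orth_proj E x))\<^sup>2"
    by (rule norm_add_orthogonal_comp[OF orth_proj_in[OF E] orth_proj_perp[OF E]])
  then show ?thesis
    by simp
qed

lemma norm_orth_proj_le:
  assumes "fin_dim_subspace E"
  shows "norm (orth_proj E x) \<le> norm x"
proof -
  have "(norm (orth_proj E x))\<^sup>2 \<le> (norm x)\<^sup>2"
    using norm_orth_proj_Pythagorean[OF assms, of x] zero_le_power2[of "norm (x - orth_proj E x)"]
    by linarith
  then show ?thesis
    by (rule power2_le_imp_le) simp
qed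

lemma orth_proj_eq_0_iff:
  "fin_dim_subspace E \<Longrightarrow> orth_proj E x = 0 \<longleftrightarrow> x \<in> orthogonal_comp E"
  using orth_proj_perp[of E x] orth_proj_eqI[of E 0 x]
  by (auto simp: fin_dim_subspace_def subspace_0)

lemma Vw_iff: "x \<in> Vw W w \<longleftrightarrow> x - w \<in> orthogonal_comp W"
  unfolding Vw_def by (auto intro: image_eqI[of _ _ "x - w"])

lemma Vw_diff: "x \<in> Vw W w \<Longrightarrow> v \<in> Vw W w \<Longrightarrow> x - v \<in> orthogonal_comp W"
  unfolding Vw_iff using subspace_diff[OF subspace_orthogonal_comp, of "x - w" W "v - w"] by simp

subsection \<open>The PBDW estimator\<close>

lemma mu_EW_finiteE:
  fixes V W :: "'v::real_inner set"
  assumes W: "fin_dim_subspace W" and V: "subspace V" and fin: "mu_EW V W < \<infinity>"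
  obtains \<mu> where "mu_EW V W = ereal \<mu>" "1 \<le> \<mu>" "\<And>e. e \<in> V \<Longrightarrow> norm e \<le> \<mu> * norm (orth_proj W e)"
proof (cases "V = {0}")
  case True
  then show ?thesis
    using that[of 1] by (simp add: mu_EW_def)
next
  case False
  have inter: "V \<inter> orthogonal_comp W = {0}"
    using fin False by (auto simp: mu_EW_def split: if_splits)
  define s where "s = (SUP v\<in>V - {0}. ereal (norm v / norm (orth_proj W v)))"
  have s: "mu_EW V W = s"
    using False inter by (simp add: mu_EW_def s_def)
  have proj_pos: "0 < norm (orth_proj W e)" if "e \<in> V" "e \<noteq> 0" for e
    using orth_proj_eq_0_iff[OF W, of e] inter that by auto
  have ratio_le: "ereal (norm e / norm (orth_proj W e)) \<le> s" if "e \<in> V" "e \<noteq> 0" for e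
    unfolding s_def using that by (intro SUP_upper) auto
  obtain e0 where e0: "e0 \<in> V" "e0 \<noteq> 0"
    using False V subspace_0 by blast
  have "1 \<le> norm e0 / norm (orth_proj W e0)"
    using proj_pos[OF e0] norm_orth_proj_le[OF W, of e0] by simp
  then have "ereal 1 \<le> s"
    using ratio_le[OF e0] order_trans ereal_less_eq(3) by blast
  moreover have "s < \<infinity>"
    using fin s by simp
  ultimately obtain \<mu> where \<mu>: "s = ereal \<mu>" "1 \<le> \<mu>"
    by (cases s) auto
  have "norm e \<le> \<mu> * norm (orth_proj W e)" if "e \<in> V" for e
  proof (cases "e = 0")
    case False
    then have "norm e / norm (orth_proj W e) \<le> \<mu>"
      using ratio_le[OF that] \<mu> by simp
    then show ?thesis
      using proj_pos[OF that False] by (simp add: divide_le_eq)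
  qed (use \<mu> in simp)
  then show ?thesis
    using that s \<mu> by blast
qed

lemma sum_sq_le_Cauchy_Schwarz:
  fixes b t g \<mu> :: real
  assumes "1 \<le> \<mu>" "0 \<le> b" "0 \<le> t" "0 \<le> g" "b\<^sup>2 \<le> (\<mu>\<^sup>2 - 1) * t\<^sup>2"
  shows "(b + g)\<^sup>2 \<le> \<mu>\<^sup>2 * (t\<^sup>2 + g\<^sup>2)"
proof -
  define \<nu> where "\<nu> = sqrt (\<mu>\<^sup>2 - 1)"
  have \<nu>: "\<nu>\<^sup>2 = \<mu>\<^sup>2 - 1" "0 \<le> \<nu>"
    using assms(1) by (simp_all add: \<nu>_def one_le_power)
  have "b\<^sup>2 \<le> (\<nu> * t)\<^sup>2"
    using assms(5) \<nu>(1) by (simp add: power_mult_distrib)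
  then have "b \<le> \<nu> * t"
    by (rule power2_le_imp_le) (use assms(3) \<nu>(2) in simp)
  then have "(b + g)\<^sup>2 \<le> (\<nu> * t + g)\<^sup>2"
    using assms(2,4) by (intro power_mono) auto
  also have "\<dots> \<le> (1 + \<nu>\<^sup>2) * (t\<^sup>2 + g\<^sup>2)"
    using sum_squares_ge_zero[of "\<nu> * g - t" 0] by (simp add: power2_eq_square algebra_simps)
  finally show ?thesis
    using \<nu> by simp
qed

lemma fin_dim_subspace_linear_image:
  assumes "linear f" "fin_dim_subspace V"
  shows "fin_dim_subspace (f ` V)"
proof -
  obtain B where "finite B" "V = span B"
    using assms(2) by (auto simp: fin_dim_subspace_def)
  then have "f ` V = span (f ` B)"
    by (simp add: span_linear_image[OF assms(1)])
  then show ?thesis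
    using \<open>finite B\<close> by (auto simp: fin_dim_subspace_def subspace_span)
qed

lemma norm_orth_residual_le:
  assumes W: "fin_dim_subspace W" and "norm e \<le> \<mu> * norm (orth_proj W e)"
  shows "(norm (e - orth_proj W e))\<^sup>2 \<le> (\<mu>\<^sup>2 - 1) * (norm (orth_proj W e))\<^sup>2"
proof -
  have "(norm e)\<^sup>2 \<le> (\<mu> * norm (orth_proj W e))\<^sup>2"
    using assms(2) by (intro power_mono) auto
  then show ?thesis
    using norm_orth_proj_Pythagorean[OF W, of e] by (simp add: power_mult_distrib algebra_simps)
qed

lemma norm_sq_excess_le:
  fixes W V :: "'v::real_inner set"
  assumes W: "fin_dim_subspace W" and V: "subspace V" and \<mu>: "1 \<le> \<mu>"
    and bound: "\<And>e. e \<in> V \<Longrightarrow> norm e \<le> \<mu> * norm (orth_proj W e)"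
    and g: "g \<in> W" "g \<in> orthogonal_comp (orth_proj W ` V)"
    and c: "c \<in> orthogonal_comp W" and e: "e \<in> V"
  shows "(norm g)\<^sup>2 + (norm c / \<mu>)\<^sup>2 \<le> (norm (g + c - e))\<^sup>2"
proof -
  define P where "P = orth_proj W"
  define \<gamma> where "\<gamma> = norm (c - (e - P e))"
  have "(norm (g + c - e))\<^sup>2 = (norm ((g - P e) + (c - (e - P e))))\<^sup>2"
    by (simp add: algebra_simps)
  also have "\<dots> = (norm (g - P e))\<^sup>2 + \<gamma>\<^sup>2"
    unfolding \<gamma>_def
  proof (rule norm_add_orthogonal_comp)
    show "g - P e \<in> W"
      using g(1) W orth_proj_in[OF W] by (simp add: P_def fin_dim_subspace_def subspace_diff)
    show "c - (e - P e) \<in> orthogonal_comp W"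
      using c orth_proj_perp[OF W, of e] subspace_diff[OF subspace_orthogonal_comp]
      by (simp add: P_def)
  qed
  also have "(norm (g - P e))\<^sup>2 = (norm g)\<^sup>2 + (norm (P e))\<^sup>2"
  proof -
    have "- P e \<in> P ` V"
      using e V linear_orth_proj[OF W]
      by (metis P_def image_eqI linear_neg subspace_neg)
    then show ?thesis
      using norm_add_orthogonal_comp[of "- P e" "P ` V" g] g(2) by (simp add: P_def algebra_simps)
  qed
  finally have dist_eq: "(norm (g + c - e))\<^sup>2 = (norm g)\<^sup>2 + ((norm (P e))\<^sup>2 + \<gamma>\<^sup>2)"
    by simp
  have "norm c \<le> norm (e - P e) + \<gamma>"
    unfolding \<gamma>_def using norm_triangle_ineq[of "e - P e" "c - (e - P e)"] by simp
  then have "(norm c)\<^sup>2 \<le> (norm (e - P e) + \<gamma>)\<^sup>2"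
    by (intro power_mono) auto
  also have "\<dots> \<le> \<mu>\<^sup>2 * ((norm (P e))\<^sup>2 + \<gamma>\<^sup>2)"
    using norm_orth_residual_le[OF W bound[OF e]] \<mu>
    by (intro sum_sq_le_Cauchy_Schwarz) (auto simp: P_def \<gamma>_def)
  finally have "(norm c / \<mu>)\<^sup>2 \<le> (norm (P e))\<^sup>2 + \<gamma>\<^sup>2"
    using \<mu> by (simp add: power_divide divide_le_eq mult.commute)
  then show ?thesis
    unfolding dist_eq by simp
qed

lemma exists_distance_excess_center:
  fixes W V :: "'v::real_inner set"
  assumes W: "fin_dim_subspace W" and V: "fin_dim_subspace V" and \<mu>: "1 \<le> \<mu>"
    and bound: "\<And>e. e \<in> V \<Longrightarrow> norm e \<le> \<mu> * norm (orth_proj W e)" and w: "w \<in> W"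
  obtains v m where "v \<in> Vw W w" "0 \<le> m" "infdist v ((\<lambda>z. ub + z) ` V) \<le> m"
    "\<And>x a. x \<in> Vw W w \<Longrightarrow> a \<in> (\<lambda>z. ub + z) ` V \<Longrightarrow>
       m\<^sup>2 + (norm (x - v) / \<mu>)\<^sup>2 \<le> (norm (x - a))\<^sup>2"
proof -
  define P where "P = orth_proj W"
  have sW: "subspace W" and sV: "subspace V"
    using W V by (simp_all add: fin_dim_subspace_def)
  have PV: "fin_dim_subspace (P ` V)"
    unfolding P_def by (rule fin_dim_subspace_linear_image[OF linear_orth_proj[OF W] V])
  obtain e0 where e0: "e0 \<in> V" "orth_proj (P ` V) (w - P ub) = P e0"
    using orth_proj_in[OF PV] by (metis imageE)
  define a0 where "a0 = ub + e0"
  define g where "g = w - P a0"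
  have g_perp: "g \<in> orthogonal_comp (P ` V)"
    using orth_proj_perp[OF PV, of "w - P ub"] e0(2)
    by (simp add: g_def a0_def P_def linear_add[OF linear_orth_proj[OF W]] algebra_simps)
  have gW: "g \<in> W"
    unfolding g_def P_def using sW w orth_proj_in[OF W] by (simp add: subspace_diff)
  show thesis
  proof
    show v: "a0 + g \<in> Vw W w"
      unfolding Vw_iff g_def P_def using orth_proj_perp[OF W] by simp
    show "0 \<le> norm g"
      by simp
    show "infdist (a0 + g) ((\<lambda>z. ub + z) ` V) \<le> norm g"
      by (rule infdist_le2[of a0]) (use e0(1) in \<open>auto simp: a0_def dist_norm\<close>)
    fix x a
    assume x: "x \<in> Vw W w" and "a \<in> (\<lambda>z. ub + z) ` V"
    then obtain e where e: "e \<in> V" "a = ub + e"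
      by blast
    have "(norm g)\<^sup>2 + (norm (x - (a0 + g)) / \<mu>)\<^sup>2
          \<le> (norm (g + (x - (a0 + g)) - (e - e0)))\<^sup>2"
      using g_perp gW Vw_diff[OF x v] e(1) e0(1) sV
      by (intro norm_sq_excess_le[OF W sV \<mu> bound]) (auto simp: P_def subspace_diff)
    then show "(norm g)\<^sup>2 + (norm (x - (a0 + g)) / \<mu>)\<^sup>2 \<le> (norm (x - a))\<^sup>2"
      by (simp add: e(2) a0_def algebra_simps)
  qed
qed

lemma le_infdistI: "A \<noteq> {} \<Longrightarrow> (\<And>a. a \<in> A \<Longrightarrow> d \<le> dist x a) \<Longrightarrow> d \<le> infdist x A"
  unfolding infdist_notempty by (rule cINF_greatest)

lemma pbdw_eqI:
  assumes "v \<in> Vw W w" "\<And>x. x \<in> Vw W w \<Longrightarrow> infdist v A \<le> infdist x A"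
    and "\<And>x. x \<in> Vw W w \<Longrightarrow> infdist x A \<le> infdist v A \<Longrightarrow> x = v"
  shows "pbdw W A w = v"
  unfolding pbdw_def by (rule the_equality) (use assms in blast)+

lemma pbdw_eq_distance_excess_center:
  assumes A: "A \<noteq> {}" and v: "v \<in> Vw W w" and m: "0 \<le> m" "infdist v A \<le> m" and "\<mu> \<noteq> 0"
    and excess: "\<And>x a. x \<in> Vw W w \<Longrightarrow> a \<in> A \<Longrightarrow> m\<^sup>2 + (norm (x - v) / \<mu>)\<^sup>2 \<le> (norm (x - a))\<^sup>2"
  shows "pbdw W A w = v"
proof (rule pbdw_eqI[OF v])
  fix x assume x: "x \<in> Vw W w"
  have excess_infdist: "sqrt (m\<^sup>2 + (norm (x - v) / \<mu>)\<^sup>2) \<le> infdist x A"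
    using A
  proof (rule le_infdistI)
    fix a assume "a \<in> A"
    then show "sqrt (m\<^sup>2 + (norm (x - v) / \<mu>)\<^sup>2) \<le> dist x a"
      using excess[OF x] real_sqrt_le_mono by (fastforce simp: dist_norm)
  qed
  have "m \<le> sqrt (m\<^sup>2 + (norm (x - v) / \<mu>)\<^sup>2)"
    using m(1) by (simp add: real_le_rsqrt)
  then show "infdist v A \<le> infdist x A"
    using m(2) excess_infdist by linarith
  assume "infdist x A \<le> infdist v A"
  then have "sqrt (m\<^sup>2 + (norm (x - v) / \<mu>)\<^sup>2) \<le> sqrt (m\<^sup>2)"
    using m excess_infdist by simp
  then have "(norm (x - v) / \<mu>)\<^sup>2 \<le> 0"
    by (simp only: real_sqrt_le_iff)
  then show "x = v"
    using \<open>\<mu> \<noteq> 0\<close> by simp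
qed

lemma
  fixes W V :: "'v::real_inner set"
  assumes W: "fin_dim_subspace W" and V: "fin_dim_subspace V" and \<mu>: "1 \<le> \<mu>"
    and bound: "\<And>e. e \<in> V \<Longrightarrow> norm e \<le> \<mu> * norm (orth_proj W e)" and w: "w \<in> W"
  shows pbdw_in_Vw_of_bound: "pbdw W ((\<lambda>z. ub + z) ` V) w \<in> Vw W w"
    and norm_diff_pbdw_le_of_bound: "\<And>x a. x \<in> Vw W w \<Longrightarrow> a \<in> (\<lambda>z. ub + z) ` V \<Longrightarrow>
      norm (x - pbdw W ((\<lambda>z. ub + z) ` V) w) \<le> \<mu> * norm (x - a)"
proof -
  define A where "A = (\<lambda>z. ub + z) ` V"
  obtain v m where v: "v \<in> Vw W w" and m: "0 \<le> m" "infdist v A \<le> m"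
    and excess: "\<And>x a. x \<in> Vw W w \<Longrightarrow> a \<in> A \<Longrightarrow> m\<^sup>2 + (norm (x - v) / \<mu>)\<^sup>2 \<le> (norm (x - a))\<^sup>2"
    using exists_distance_excess_center[OF W V \<mu> bound w] unfolding A_def by metis
  have "A \<noteq> {}"
    using V by (auto simp: A_def fin_dim_subspace_def dest: subspace_0)
  then have pbdw_eq: "pbdw W A w = v"
    using \<mu> by (intro pbdw_eq_distance_excess_center[OF _ v m _ excess]) auto
  then show "pbdw W ((\<lambda>z. ub + z) ` V) w \<in> Vw W w"
    using v by (simp add: A_def)
  fix x a assume "x \<in> Vw W w" "a \<in> (\<lambda>z. ub + z) ` V"
  then have "(norm (x - v) / \<mu>)\<^sup>2 \<le> (norm (x - a))\<^sup>2"
    using excess[of x a] zero_le_power2[of m] unfolding A_def by linarith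
  then have "norm (x - v) / \<mu> \<le> norm (x - a)"
    by (rule power2_le_imp_le) simp
  then show "norm (x - pbdw W ((\<lambda>z. ub + z) ` V) w) \<le> \<mu> * norm (x - a)"
    using pbdw_eq \<mu> by (simp add: A_def divide_le_eq mult.commute)
qed

subsection \<open>Surrogate model selection\<close>

lemma bounded_nbhd:
  assumes "bounded M" "M \<noteq> {}"
  shows "bounded (nbhd M \<sigma>)"
proof -
  obtain b where b: "\<And>x. x \<in> M \<Longrightarrow> norm x \<le> b"
    using assms(1) by (auto simp: bounded_iff)
  have "norm v \<le> \<sigma> + 1 + b" if "v \<in> nbhd M \<sigma>" for v
  proof -
    have "(INF a\<in>M. dist v a) < \<sigma> + 1"
      using that assms(2) by (simp add: nbhd_def infdist_notempty)
    moreover have "bdd_below (dist v ` M)"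
      by (rule bdd_belowI[of _ 0]) auto
    ultimately obtain a where "a \<in> M" "dist v a < \<sigma> + 1"
      using cINF_less_iff[OF assms(2)] by blast
    moreover have "norm v \<le> dist v a + norm a"
      using norm_triangle_ineq[of "v - a" a] by (simp add: dist_norm)
    ultimately show ?thesis
      using b by fastforce
  qed
  then show ?thesis
    by (auto simp: bounded_iff)
qed

lemma norm_diff_le_delta:
  assumes M: "bounded M" "M \<noteq> {}"
    and pq: "p \<in> nbhd M \<sigma>" "q \<in> nbhd M \<sigma>" "p - q \<in> orthogonal_comp W"
  shows "norm (p - q) \<le> delta M W \<sigma>"
  unfolding delta_def
proof (rule cSup_upper)
  obtain b where b: "\<And>x. x \<in> nbhd M \<sigma> \<Longrightarrow> norm x \<le> b"
    using bounded_nbhd[OF M, of \<sigma>] unfolding bounded_iff by blast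
  show "bdd_above {norm (u - v) |u v. u \<in> nbhd M \<sigma> \<and> v \<in> nbhd M \<sigma> \<and> u - v \<in> orthogonal_comp W}"
  proof (rule bdd_aboveI, clarify)
    fix u v assume "u \<in> nbhd M \<sigma>" "v \<in> nbhd M \<sigma>"
    then show "norm (u - v) \<le> b + b"
      using b[of u] b[of v] norm_triangle_ineq4[of u v] by linarith
  qed
qed (use pq in blast)

lemma delta_le_mu_MW:
  assumes "bdd_above ((\<lambda>\<sigma>. delta M W \<sigma> / \<sigma>) ` {0<..})" "0 < \<sigma>"
  shows "delta M W \<sigma> \<le> 2 * mu_MW M W * \<sigma>"
proof -
  have "delta M W \<sigma> / \<sigma> \<le> 2 * mu_MW M W"
    unfolding mu_MW_def using assms by (auto intro: cSup_upper)
  then show ?thesis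
    using assms(2) by (simp add: divide_le_eq)
qed

lemma mu_MW_nonneg:
  assumes "bounded M" "M \<noteq> {}" "bdd_above ((\<lambda>\<sigma>. delta M W \<sigma> / \<sigma>) ` {0<..})"
  shows "0 \<le> mu_MW M W"
proof -
  obtain u where "u \<in> M"
    using assms(2) by blast
  then have "u \<in> nbhd M 1"
    by (simp add: nbhd_def)
  then have "0 \<le> delta M W 1"
    using norm_diff_le_delta[OF assms(1,2), of u 1 u W] subspace_0[OF subspace_orthogonal_comp, of W]
    by simp
  then show ?thesis
    using delta_le_mu_MW[OF assms(3), of 1] by simp
qed

lemma norm_diff_le_mu_MW:
  assumes M: "bounded M" "M \<noteq> {}"
    and delta0: "delta M W 0 = 0" and bdd: "bdd_above ((\<lambda>\<sigma>. delta M W \<sigma> / \<sigma>) ` {0<..})"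
    and "0 \<le> \<sigma>" and pq: "p \<in> nbhd M \<sigma>" "q \<in> nbhd M \<sigma>" "p - q \<in> orthogonal_comp W"
  shows "norm (p - q) \<le> 2 * mu_MW M W * \<sigma>"
proof (cases "\<sigma> = 0")
  case True
  then show ?thesis
    using norm_diff_le_delta[OF M pq] delta0 by simp
next
  case False
  with \<open>0 \<le> \<sigma>\<close> have "delta M W \<sigma> \<le> 2 * mu_MW M W * \<sigma>"
    by (intro delta_le_mu_MW[OF bdd]) simp
  then show ?thesis
    using norm_diff_le_delta[OF M pq] by linarith
qed

lemma norm_diff_le_surrogate_selection:
  assumes M: "bounded M" and delta0: "delta M W 0 = 0"
    and bdd: "bdd_above ((\<lambda>\<sigma>. delta M W \<sigma> / \<sigma>) ` {0<..})"
    and surr: "0 < r" "r \<le> R" "\<And>v. r * infdist v M \<le> S v \<and> S v \<le> R * infdist v M"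
    and u: "u \<in> M" and perp: "u - v \<in> orthogonal_comp W" and select: "S v \<le> S v'"
  shows "norm (u - v) \<le> (2 * mu_MW M W * (R / r)) * norm (u - v')"
proof -
  define s where "s = infdist v M"
  have "M \<noteq> {}"
    using u by blast
  have "norm (u - v) \<le> 2 * mu_MW M W * s"
    using u infdist_nonneg[of v M]
    by (intro norm_diff_le_mu_MW[OF M \<open>M \<noteq> {}\<close> delta0 bdd _ _ _ perp]) (auto simp: s_def nbhd_def)
  moreover have "r * s \<le> R * norm (u - v')"
  proof -
    have "r * s \<le> S v"
      using surr(3) unfolding s_def by blast
    also have "\<dots> \<le> S v'"
      by (rule select)
    also have "\<dots> \<le> R * infdist v' M"
      using surr(3) by blast
    also have "\<dots> \<le> R * norm (u - v')"
      using infdist_le[OF u, of v'] surr(1,2)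
      by (intro mult_left_mono) (simp_all add: dist_norm norm_minus_commute)
    finally show ?thesis .
  qed
  then have "s \<le> (R / r) * norm (u - v')"
    using surr(1) by (simp add: pos_le_divide_eq mult.commute)
  then have "2 * mu_MW M W * s \<le> 2 * mu_MW M W * ((R / r) * norm (u - v'))"
    using mu_MW_nonneg[OF M \<open>M \<noteq> {}\<close> bdd] by (intro mult_left_mono) simp_all
  ultimately show ?thesis
    by (simp add: mult.assoc)
qed

lemma pbdw_in_Vw:
  fixes W V :: "'v::real_inner set"
  assumes W: "fin_dim_subspace W" and V: "fin_dim_subspace V" and fin: "mu_EW V W < \<infinity>"
    and w: "w \<in> W"
  shows "pbdw W ((\<lambda>z. ub + z) ` V) w \<in> Vw W w"
proof -
  obtain \<mu> where "1 \<le> \<mu>" "\<And>e. e \<in> V \<Longrightarrow> norm e \<le> \<mu> * norm (orth_proj W e)"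
    using mu_EW_finiteE[OF W _ fin] V by (auto simp: fin_dim_subspace_def)
  then show ?thesis
    using pbdw_in_Vw_of_bound[OF W V _ _ w] by blast
qed

lemma norm_diff_pbdw_le_admissible:
  fixes W V :: "'v::real_inner set"
  assumes W: "fin_dim_subspace W" and V: "fin_dim_subspace V" and fin: "mu_EW V W < \<infinity>"
    and w: "w \<in> W" and x: "x \<in> Vw W w"
    and \<epsilon>: "infdist x ((\<lambda>z. ub + z) ` V) \<le> \<epsilon>" and adm: "mu_EW V W * ereal \<epsilon> \<le> ereal \<sigma>"
  shows "norm (x - pbdw W ((\<lambda>z. ub + z) ` V) w) \<le> \<sigma>"
proof -
  obtain \<mu> where \<mu>: "mu_EW V W = ereal \<mu>" "1 \<le> \<mu>"
    and bound: "\<And>e. e \<in> V \<Longrightarrow> norm e \<le> \<mu> * norm (orth_proj W e)"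
    using mu_EW_finiteE[OF W _ fin] V by (auto simp: fin_dim_subspace_def)
  have "(\<lambda>z. ub + z) ` V \<noteq> {}"
    using V by (auto simp: fin_dim_subspace_def dest: subspace_0)
  then have "norm (x - pbdw W ((\<lambda>z. ub + z) ` V) w) / \<mu> \<le> infdist x ((\<lambda>z. ub + z) ` V)"
    using norm_diff_pbdw_le_of_bound[OF W V \<mu>(2) bound w x] \<mu>(2)
    by (intro le_infdistI) (auto simp: dist_norm divide_le_eq mult.commute)
  also have "\<dots> \<le> \<epsilon>"
    by (rule \<epsilon>)
  finally have "norm (x - pbdw W ((\<lambda>z. ub + z) ` V) w) \<le> \<mu> * \<epsilon>"
    using \<mu>(2) by (simp add: divide_le_eq mult.commute)
  also have "\<mu> * \<epsilon> \<le> \<sigma>"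
    using adm \<mu>(1) by simp
  finally show ?thesis .
qed

lemma le_mult_Min:
  fixes f :: "'a \<Rightarrow> real"
  assumes "finite I" "I \<noteq> {}" "\<And>k. k \<in> I \<Longrightarrow> a \<le> C * f k"
  shows "a \<le> C * Min (f ` I)"
proof -
  have "Min (f ` I) \<in> f ` I"
    by (rule Min_in) (use assms in auto)
  then obtain k where "k \<in> I" "Min (f ` I) = f k"
    by auto
  then show ?thesis
    using assms(3) by simp
qed

theorem theorem3p4:
  fixes Y :: "(real ^ 'd) set"
    and u :: "real ^ 'd \<Rightarrow> 'v::{real_inner, complete_space}"
    and W :: "'v set"
    and K :: nat
    and Mk :: "nat \<Rightarrow> 'v set"
    and ubar :: "nat \<Rightarrow> 'v"
    and barV :: "nat \<Rightarrow> 'v set"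
    and eps :: "nat \<Rightarrow> real"
    and S :: "'v \<Rightarrow> real"
    and r R :: real
    and y :: "real ^ 'd"
    and kstar :: nat
  assumes Y: "compact Y" "continuous_on Y u"
    and W: "fin_dim_subspace W"
    and K: "K \<ge> 1"
    and cover: "u ` Y = (\<Union>k\<in>{1..K}. Mk k)"
    and Vk: "\<And>k. k \<in> {1..K} \<Longrightarrow> fin_dim_subspace (barV k) \<and> dim (barV k) \<le> dim W"
    and epsk: "\<And>k x. k \<in> {1..K} \<Longrightarrow> x \<in> Mk k \<Longrightarrow>
                 infdist x ((\<lambda>z. ubar k + z) ` barV k) \<le> eps k"
    and muk: "\<And>k. k \<in> {1..K} \<Longrightarrow> mu_EW (barV k) W < \<infinity>"
    and surr: "0 < r" "r \<le> R"
      "\<And>v. r * infdist v (u ` Y) \<le> S v \<and> S v \<le> R * infdist v (u ` Y)"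
    and delta0: "delta (u ` Y) W 0 = 0"
    and muMW: "bdd_above ((\<lambda>\<sigma>. delta (u ` Y) W \<sigma> / \<sigma>) ` {0<..})"
    and y: "y \<in> Y"
    and kstar: "kstar \<in> {1..K}"
      "\<And>k. k \<in> {1..K} \<Longrightarrow>
         S (pbdw W ((\<lambda>z. ubar kstar + z) ` barV kstar) (orth_proj W (u y)))
         \<le> S (pbdw W ((\<lambda>z. ubar k + z) ` barV k) (orth_proj W (u y)))"
  shows "norm (u y - pbdw W ((\<lambda>z. ubar kstar + z) ` barV kstar) (orth_proj W (u y)))
           \<le> (2 * mu_MW (u ` Y) W * (R / r)) *
             Min ((\<lambda>k. norm (u y - pbdw W ((\<lambda>z. ubar k + z) ` barV k) (orth_proj W (u y)))) ` {1..K})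
       \<and> (\<forall>\<sigma>>0. (\<forall>k\<in>{1..K}. mu_EW (barV k) W * ereal (eps k) \<le> ereal \<sigma>) \<longrightarrow>
            norm (u y - pbdw W ((\<lambda>z. ubar kstar + z) ` barV kstar) (orth_proj W (u y)))
              \<le> (2 * mu_MW (u ` Y) W * (R / r)) * \<sigma>)"
proof -
  define w where "w = orth_proj W (u y)"
  define v where "v = (\<lambda>k. pbdw W ((\<lambda>z. ubar k + z) ` barV k) w)"
  define C where "C = 2 * mu_MW (u ` Y) W * (R / r)"
  have M: "bounded (u ` Y)" "u y \<in> u ` Y"
    using compact_imp_bounded[OF compact_continuous_image[OF Y(2,1)]] y by auto
  have w: "w \<in> W" and uV: "u y \<in> Vw W w"
    using orth_proj_in[OF W] orth_proj_perp[OF W] by (simp_all add: w_def Vw_iff)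
  have vV: "v k \<in> Vw W w" if "k \<in> {1..K}" for k
    unfolding v_def using pbdw_in_Vw[OF W _ muk w] Vk that by blast
  have "norm (u y - v kstar) \<le> C * norm (u y - v k)" if "k \<in> {1..K}" for k
    unfolding C_def using kstar(2)[OF that] Vw_diff[OF uV vV[OF kstar(1)]]
    by (intro norm_diff_le_surrogate_selection[OF M(1) delta0 muMW surr M(2)])
      (auto simp: v_def w_def)
  then have part1: "norm (u y - v kstar) \<le> C * Min ((\<lambda>k. norm (u y - v k)) ` {1..K})"
    using K by (intro le_mult_Min) auto
  have "norm (u y - v kstar) \<le> C * \<sigma>"
    if "\<forall>k\<in>{1..K}. mu_EW (barV k) W * ereal (eps k) \<le> ereal \<sigma>" for \<sigma>
  proof -
    obtain k0 where k0: "k0 \<in> {1..K}" "u y \<in> Mk k0"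
      using M(2) cover by auto
    have "norm (u y - v k0) \<le> \<sigma>"
      unfolding v_def using Vk[OF k0(1)] that k0
      by (intro norm_diff_pbdw_le_admissible[OF W _ muk w uV epsk]) auto
    then have "Min ((\<lambda>k. norm (u y - v k)) ` {1..K}) \<le> \<sigma>"
      using k0(1) by (meson Min_le finite_atLeastAtMost finite_imageI image_eqI order_trans)
    moreover have "0 \<le> C"
      using mu_MW_nonneg[OF M(1) _ muMW] M(2) surr(1,2) unfolding C_def by fastforce
    ultimately show ?thesis
      using part1 by (meson mult_left_mono order_trans)
  qed
  with part1 show ?thesis
    by (simp add: C_def v_def w_def)
qed

end
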